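(* Let $0<i_1<i_2<\cdots<i_L$ be integers and let $\mathcal S=\{x_0,x_{i_1},\ldots,x_{i_L}\}$, with associated restricted right-arm rotation distance $d_{RRA}^{\mathcal S}$ (rotations allowed only at the nodes at levels $0,i_1,\ldots,i_L$ on the right arm). Let $T_1,T_2$ be finite rooted binary trees with the same number of nodes such that $(T_1,T_2)$ is a reduced tree pair diagram, and let the word associated to $(T_1,T_2)$ (its unique normal form) be $x_{a_1}^{r_1}\cdots x_{a_k}^{r_k}x_{b_l}^{-s_l}\cdots x_{b_1}^{-s_1}$. If some $x_t^{\pm1}$ with $1\le t\le i_1-1$ appears in this normal form, then $d_{RRA}^{\mathcal S}(T_1,T_2)$ is not defined. Conversely, if no $x_t^{\pm1}$ with $1\le t\le i_1-1$ appears in this normal form, then $d_{RRA}^{\mathcal S}(T_1,T_2)$ is defined.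
   Context: Trees: all trees are finite rooted binary trees in which each internal vertex (node) has a left and a right child; childless vertices are leaves. A tree with $n$ nodes has $n+1$ leaves, numbered $0,1,\ldots,n$ from left to right. The right arm (right side) of a tree consists of the root together with all nodes reachable from the root by a path consisting only of right edges. The level of a node is the number of edges on the path from it to the root. An exposed caret is a node both of whose children are leaves; its leaves $i,i+1$ form a sibling pair. Rotations: if $N$ is a node whose left child $M$ is a node, with $A,B$ the left and right subtrees of $M$ and $C$ the right subtree of $N$, right rotation at $N$ replaces the subtree at $N$ by a tree whose root has left subtree $A$ and whose right child is a node with left subtree $B$ and right subtree $C$; left rotation at $N$ is the inverse operation (possible only when the right child of $N$ is a node). Rotations preserve the number of nodes. Thompson's group $F=\langle x_0,x_1,\ldots\mid x_i^{-1}x_nx_i=x_{n+1}\ (i<n)\rangle$; its elements have normal forms $x_{a_1}^{r_1}\cdots x_{a_k}^{r_k}x_{b_l}^{-s_l}\cdots x_{b_1}^{-s_1}$ ($r_i,s_i>0$, $a_1<\cdots<a_k$, $b_1<\cdots<b_l$), unique if whenever both $x_i$ and $x_i^{-1}$ occur so does $x_{i+1}^{\pm1}$. Tree pair diagrams: a pair $(T_1,T_2)$ of trees with the same number $n$ of nodes. The leaf exponent of leaf $k$ in a tree is the length of the longest path of left edges going upward from leaf $k$ none of whose vertices lies on the right arm. The word associated to $(T_1,T_2)$ is $x_0^{f_0}x_1^{f_1}\cdots x_n^{f_n}x_n^{-e_n}\cdots x_1^{-e_1}x_0^{-e_0}$, where $e_i$ (resp. $f_i$) is the leaf exponent of leaf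 $i$ in $T_1$ (resp. $T_2$); $(T_1,T_2)$ represents the element of $F$ given by this word. The diagram is reduced if there is no $i$ such that leaves $i,i+1$ form a sibling pair in both $T_1$ and $T_2$; for a reduced diagram the associated word is the unique normal form. Restricted right-arm rotation distance: for $\mathcal S=\{x_0,x_{i_1},\ldots,x_{i_L}\}$ and trees $T_1,T_2$ with the same number of nodes, $d_{RRA}^{\mathcal S}(T_1,T_2)$ is the minimal number of (left or right) rotations, each performed at a node on the right arm at one of the levels $0,i_1,\ldots,i_L$, needed to transform $T_1$ into $T_2$; it is said to be defined when some such sequence of rotations exists. *)

theory Defs
  imports Main
begin

datatype tree = Leaf | Node tree tree

fun num_nodes :: "tree \<Rightarrow> nat" where
  "num_nodes Leaf = 0"
| "num_nodes (Node l r) = Suc (num_nodes l + num_nodes r)"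

text \<open>Vertices are addressed by their path from the root (False = left edge, True = right edge).
  The leaves, listed from left to right (leaf 0, leaf 1, ...).\<close>
fun leaves :: "tree \<Rightarrow> bool list list" where
  "leaves Leaf = [[]]"
| "leaves (Node l r) = map (Cons False) (leaves l) @ map (Cons True) (leaves r)"

text \<open>A vertex (given by its path) that is an ancestor of a leaf is a node; it lies on the right arm
  iff its path consists of right edges only.\<close>
definition on_right_arm_path :: "bool list \<Rightarrow> bool" where
  "on_right_arm_path q \<longleftrightarrow> list_all id q"

text \<open>Leaf exponent of leaf k: length m of the longest path of left edges going upward from the leaf
  none of whose vertices lies on the right arm. The vertices of such a path are the leaf itself
  (not a node, hence not on the right arm) and its ancestors at distance 1..m.\<close>
definition leaf_exp :: "tree \<Rightarrow> nat \<Rightarrow> nat" where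
  "leaf_exp T k = (let p = leaves T ! k in
     Max {m. m \<le> length p \<and> drop (length p - m) p = replicate m False \<and>
             (\<forall>j\<in>{1..m}. \<not> on_right_arm_path (take (length p - j) p))})"

definition sibling_pair :: "tree \<Rightarrow> nat \<Rightarrow> bool" where
  "sibling_pair T i \<longleftrightarrow> Suc i < length (leaves T) \<and>
     (\<exists>q. leaves T ! i = q @ [False] \<and> leaves T ! Suc i = q @ [True])"

definition reduced :: "tree \<Rightarrow> tree \<Rightarrow> bool" where
  "reduced T1 T2 \<longleftrightarrow> \<not> (\<exists>i. sibling_pair T1 i \<and> sibling_pair T2 i)"

text \<open>The word associated to (T1,T2), as a list of letters (generator index, integer exponent):
  x_0^{f_0} ... x_n^{f_n} x_n^{-e_n} ... x_0^{-e_0}.\<close>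
definition assoc_word :: "tree \<Rightarrow> tree \<Rightarrow> (nat \<times> int) list" where
  "assoc_word T1 T2 = (let n = num_nodes T1 in
     map (\<lambda>j. (j, int (leaf_exp T2 j))) [0..<Suc n] @
     map (\<lambda>j. (j, - int (leaf_exp T1 j))) (rev [0..<Suc n]))"

definition appears :: "nat \<Rightarrow> (nat \<times> int) list \<Rightarrow> bool" where
  "appears t w \<longleftrightarrow> (\<exists>z. (t, z) \<in> set w \<and> z \<noteq> 0)"

fun rot_right :: "tree \<Rightarrow> tree option" where
  "rot_right (Node (Node A B) C) = Some (Node A (Node B C))"
| "rot_right _ = None"

fun rot_left :: "tree \<Rightarrow> tree option" where
  "rot_left (Node A (Node B C)) = Some (Node (Node A B) C)"
| "rot_left _ = None"

fun at_right_arm :: "nat \<Rightarrow> (tree \<Rightarrow> tree option) \<Rightarrow> tree \<Rightarrow> tree option" where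
  "at_right_arm 0 f t = f t"
| "at_right_arm (Suc k) f Leaf = None"
| "at_right_arm (Suc k) f (Node l r) = map_option (Node l) (at_right_arm k f r)"

definition rra_step :: "nat set \<Rightarrow> tree \<Rightarrow> tree \<Rightarrow> bool" where
  "rra_step Lv T T' \<longleftrightarrow> (\<exists>k\<in>Lv. at_right_arm k rot_right T = Some T' \<or> at_right_arm k rot_left T = Some T')"

definition rra_defined :: "nat set \<Rightarrow> tree \<Rightarrow> tree \<Rightarrow> bool" where
  "rra_defined Lv T1 T2 \<longleftrightarrow> (rra_step Lv)\<^sup>*\<^sup>* T1 T2"

definition d_RRA :: "nat set \<Rightarrow> tree \<Rightarrow> tree \<Rightarrow> nat" where
  "d_RRA Lv T1 T2 = (LEAST n. ((rra_step Lv) ^^ n) T1 T2)"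

end

theory Submission
  imports Defs
begin

(* Tag every node by the index of its leftmost leaf. Leaf t has nonzero leaf exponent exactly
   when some node off the right arm carries tag t. A rotation at right-arm level 0 changes only
   the off-arm node tagged 0, and a rotation at level k > 0 only nodes tagged at least k; so
   rotations at the levels 0, i_1, ..., i_L preserve the off-arm nodes tagged 1, ..., i_1 - 1
   together with their subtrees. Such a node, present in both trees, would contain a common
   exposed caret, contradicting reducedness.
   Conversely, if no off-arm node has such a tag, repeated right rotations at the first right-arm
   node with a non-leaf left child bring each tree to the right vine: that node is at level 0 or
   at a level j >= i_1, and a rotation at level j is simulated by j - i_1 left rotations at the
   root, a rotation at level i_1, and the inverse root rotations. *)

fun num_leaves :: "tree \<Rightarrow> nat" where
  "num_leaves Leaf = 1"
| "num_leaves (Node l r) = num_leaves l + num_leaves r"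

lemma num_leaves_pos: "0 < num_leaves T"
  by (induction T) auto

lemma length_leaves: "length (leaves T) = num_leaves T"
  by (induction T) auto

lemma num_leaves_eq_Suc_num_nodes: "num_leaves T = Suc (num_nodes T)"
  by (induction T) auto

lemma nth_leaves_Node:
  "t < num_leaves (Node l r) \<Longrightarrow> leaves (Node l r) ! t =
     (if t < num_leaves l then False # leaves l ! t else True # leaves r ! (t - num_leaves l))"
  by (simp add: nth_append length_leaves)

lemma leaves_nth_0_replicate: "\<exists>n. leaves T ! 0 = replicate n False"
proof (induction T)
  case (Node l r)
  then obtain n where "leaves l ! 0 = replicate n False" by blast
  then have "leaves (Node l r) ! 0 = replicate (Suc n) False"
    using nth_leaves_Node[of 0 l r] num_leaves_pos[of l] by simp
  then show ?case by blast
qed simp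

lemma leaves_nth_neq_Nil: "T \<noteq> Leaf \<Longrightarrow> t < num_leaves T \<Longrightarrow> leaves T ! t \<noteq> []"
  by (cases T) (auto simp: nth_append length_leaves)

(* Each node is paired with the index of its leftmost leaf, the leaves being numbered from d. *)
fun node_subtrees :: "nat \<Rightarrow> tree \<Rightarrow> (nat \<times> tree) set" where
  "node_subtrees d Leaf = {}"
| "node_subtrees d (Node l r) =
     insert (d, Node l r) (node_subtrees d l \<union> node_subtrees (d + num_leaves l) r)"

fun off_arm_subtrees :: "nat \<Rightarrow> tree \<Rightarrow> (nat \<times> tree) set" where
  "off_arm_subtrees d Leaf = {}"
| "off_arm_subtrees d (Node l r) = node_subtrees d l \<union> off_arm_subtrees (d + num_leaves l) r"

lemma node_subtrees_bounds: "(a, U) \<in> node_subtrees d T \<Longrightarrow> d \<le> a \<and> a < d + num_leaves T"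
  by (induction T arbitrary: d) (use num_leaves_pos in fastforce)+

lemma off_arm_subtrees_subset: "off_arm_subtrees d T \<subseteq> node_subtrees d T"
  by (induction T arbitrary: d) auto

lemma node_subtrees_not_Leaf: "(a, U) \<in> node_subtrees d T \<Longrightarrow> U \<noteq> Leaf"
  by (induction T arbitrary: d) auto

lemma node_subtrees_trans:
  "(a, U) \<in> node_subtrees d T \<Longrightarrow> (b, V) \<in> node_subtrees a U \<Longrightarrow> (b, V) \<in> node_subtrees d T"
  by (induction T arbitrary: d) auto

lemma exposed_caret_in_node_subtrees: "U \<noteq> Leaf \<Longrightarrow> \<exists>b. (b, Node Leaf Leaf) \<in> node_subtrees a U"
proof (induction U arbitrary: a)
  case (Node x y)
  then show ?case by (cases "x = Leaf"; cases "y = Leaf") auto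
qed simp

lemma node_subtrees_start_iff:
  "t < num_leaves T \<Longrightarrow>
    (\<exists>U. (d + t, U) \<in> node_subtrees d T) \<longleftrightarrow> (\<exists>q. leaves T ! t = q @ [False])"
proof (induction T arbitrary: t d)
  case (Node l r)
  show ?case
  proof (cases "t < num_leaves l")
    case True
    have q: "leaves (Node l r) ! t = False # leaves l ! t"
      using nth_leaves_Node[OF Node.prems] True by (simp only: if_True)
    have "(d + t, U) \<notin> node_subtrees (d + num_leaves l) r" for U
      using node_subtrees_bounds True by fastforce
    then have "(\<exists>U. (d + t, U) \<in> node_subtrees d (Node l r)) \<longleftrightarrow>
        t = 0 \<or> (\<exists>q. leaves l ! t = q @ [False])"
      using Node.IH(1)[OF True, of d] by auto
    also have "\<dots> \<longleftrightarrow> (\<exists>q. False # leaves l ! t = q @ [False])"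
    proof (cases "t = 0")
      case True
      obtain n where "leaves l ! 0 = replicate n False" using leaves_nth_0_replicate by blast
      then have "False # leaves l ! t = replicate n False @ [False]"
        using True by (simp add: replicate_append_same)
      with True show ?thesis by blast
    next
      case False
      with \<open>t < num_leaves l\<close> have "l \<noteq> Leaf" by auto
      then have "leaves l ! t \<noteq> []" using leaves_nth_neq_Nil \<open>t < num_leaves l\<close> by blast
      with False show ?thesis by (auto simp: Cons_eq_append_conv)
    qed
    finally show ?thesis unfolding q .
  next
    case False
    define t' where "t' = t - num_leaves l"
    have t': "t = num_leaves l + t'" "t' < num_leaves r" using False Node.prems by (auto simp: t'_def)
    have q: "leaves (Node l r) ! t = True # leaves r ! t'"
      using nth_leaves_Node[OF Node.prems] False by (simp only: if_False t'_def)
    have "(d + t, U) \<notin> node_subtrees d l" for U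
      using node_subtrees_bounds False by fastforce
    then have "(\<exists>U. (d + t, U) \<in> node_subtrees d (Node l r)) \<longleftrightarrow>
        (\<exists>U. ((d + num_leaves l) + t', U) \<in> node_subtrees (d + num_leaves l) r)"
      using t' num_leaves_pos[of l] by (auto simp: add.assoc)
    also have "\<dots> \<longleftrightarrow> (\<exists>q. True # leaves r ! t' = q @ [False])"
      using Node.IH(2)[OF t'(2)] by (auto simp: Cons_eq_append_conv)
    finally show ?thesis unfolding q .
  qed
qed simp

lemma off_arm_subtrees_start_iff:
  "t < num_leaves T \<Longrightarrow> (\<exists>U. (d + t, U) \<in> off_arm_subtrees d T) \<longleftrightarrow>
     (\<exists>q. leaves T ! t = q @ [False] \<and> \<not> list_all id q)"
proof (induction T arbitrary: t d)
  case (Node l r)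
  show ?case
  proof (cases "t < num_leaves l")
    case True
    have q: "leaves (Node l r) ! t = False # leaves l ! t"
      using nth_leaves_Node[OF Node.prems] True by (simp only: if_True)
    have "(d + t, U) \<notin> off_arm_subtrees (d + num_leaves l) r" for U
      using node_subtrees_bounds off_arm_subtrees_subset True by fastforce
    then have "(\<exists>U. (d + t, U) \<in> off_arm_subtrees d (Node l r)) \<longleftrightarrow>
        (\<exists>U. (d + t, U) \<in> node_subtrees d l)" by auto
    also have "\<dots> \<longleftrightarrow> (\<exists>q. False # leaves l ! t = q @ [False] \<and> \<not> list_all id q)"
      using node_subtrees_start_iff[OF True] by (auto simp: Cons_eq_append_conv id_def)
    finally show ?thesis unfolding q .
  next
    case False
    define t' where "t' = t - num_leaves l"
    have t': "t = num_leaves l + t'" "t' < num_leaves r" using False Node.prems by (auto simp: t'_def)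
    have q: "leaves (Node l r) ! t = True # leaves r ! t'"
      using nth_leaves_Node[OF Node.prems] False by (simp only: if_False t'_def)
    have "(d + t, U) \<notin> node_subtrees d l" for U
      using node_subtrees_bounds False by fastforce
    then have "(\<exists>U. (d + t, U) \<in> off_arm_subtrees d (Node l r)) \<longleftrightarrow>
        (\<exists>U. ((d + num_leaves l) + t', U) \<in> off_arm_subtrees (d + num_leaves l) r)"
      using t' by (auto simp: add.assoc)
    also have "\<dots> \<longleftrightarrow> (\<exists>q. True # leaves r ! t' = q @ [False] \<and> \<not> list_all id q)"
      using Node.IH(2)[OF t'(2)] by (auto simp: Cons_eq_append_conv id_def)
    finally show ?thesis unfolding q .
  qed
qed simp

lemma leaf_exp_neq_0_iff:
  "leaf_exp T t \<noteq> 0 \<longleftrightarrow> (\<exists>q. leaves T ! t = q @ [False] \<and> \<not> list_all id q)"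
proof -
  define p where "p = leaves T ! t"
  define M where "M = {m. m \<le> length p \<and> drop (length p - m) p = replicate m False \<and>
    (\<forall>j\<in>{1..m}. \<not> on_right_arm_path (take (length p - j) p))}"
  have "finite M" unfolding M_def by (rule finite_subset[of _ "{..length p}"]) auto
  moreover have "0 \<in> M" unfolding M_def by simp
  ultimately have "Max M \<noteq> 0 \<longleftrightarrow> (\<exists>m\<in>M. m \<noteq> 0)"
    using Max_in Max_ge by (metis empty_iff le_zero_eq)
  also have "\<dots> \<longleftrightarrow> (\<exists>q. p = q @ [False] \<and> \<not> list_all id q)"
  proof
    assume "\<exists>m\<in>M. m \<noteq> 0"
    then obtain m where m: "m \<in> M" "m \<noteq> 0" by blast
    then have "p \<noteq> []" by (auto simp: M_def)
    then obtain q y where p: "p = q @ [y]" by (cases p rule: rev_cases) auto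
    have "y = last (drop (length p - m) p)" using m(2) \<open>p \<noteq> []\<close> by (simp add: p del: drop_append)
    also have "\<dots> = False" using m by (simp add: M_def)
    finally have "y = False" .
    moreover have "\<not> list_all id q"
    proof -
      have "\<forall>j\<in>{1..m}. \<not> on_right_arm_path (take (length p - j) p)" using m(1) by (simp add: M_def)
      moreover have "1 \<in> {1..m}" using m(2) by simp
      ultimately have "\<not> on_right_arm_path (take (length p - 1) p)" by blast
      then show ?thesis by (simp add: p on_right_arm_path_def)
    qed
    ultimately show "\<exists>q. p = q @ [False] \<and> \<not> list_all id q" using p by blast
  next
    assume "\<exists>q. p = q @ [False] \<and> \<not> list_all id q"
    then have "1 \<in> M" by (auto simp: M_def on_right_arm_path_def)
    then show "\<exists>m\<in>M. m \<noteq> 0" by auto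
  qed
  finally show ?thesis unfolding leaf_exp_def Let_def p_def M_def .
qed

lemma leaf_exp_neq_0_iff_off_arm:
  "t < num_leaves T \<Longrightarrow> leaf_exp T t \<noteq> 0 \<longleftrightarrow> (\<exists>U. (t, U) \<in> off_arm_subtrees 0 T)"
  unfolding leaf_exp_neq_0_iff using off_arm_subtrees_start_iff[of t T 0] by simp

lemma sibling_pair_Node_left: "sibling_pair l i \<Longrightarrow> sibling_pair (Node l r) i"
  unfolding sibling_pair_def using nth_leaves_Node[of i l r] nth_leaves_Node[of "Suc i" l r]
  by (auto simp: length_leaves simp del: leaves.simps)

lemma sibling_pair_Node_right: "sibling_pair r i \<Longrightarrow> sibling_pair (Node l r) (num_leaves l + i)"
  unfolding sibling_pair_def
  using nth_leaves_Node[of "num_leaves l + i" l r] nth_leaves_Node[of "Suc (num_leaves l + i)" l r]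
  by (auto simp: length_leaves simp del: leaves.simps)

lemma sibling_pair_if_exposed_caret:
  "(d + i, Node Leaf Leaf) \<in> node_subtrees d T \<Longrightarrow> sibling_pair T i"
proof (induction T arbitrary: d i)
  case (Node l r)
  consider "i = 0" "Node l r = Node Leaf Leaf" | "(d + i, Node Leaf Leaf) \<in> node_subtrees d l"
    | "(d + i, Node Leaf Leaf) \<in> node_subtrees (d + num_leaves l) r"
    using Node.prems by auto
  then show ?case
  proof cases
    case 1
    then show ?thesis by (auto simp: sibling_pair_def)
  next
    case 2
    then show ?thesis using Node.IH(1) sibling_pair_Node_left by blast
  next
    case 3
    define i' where "i' = i - num_leaves l"
    have "num_leaves l \<le> i" using node_subtrees_bounds[OF 3] by simp
    then have i: "i = num_leaves l + i'" and "d + i = (d + num_leaves l) + i'"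
      by (simp_all add: i'_def)
    then have "sibling_pair r i'" using 3 Node.IH(2) by metis
    then show ?thesis unfolding i by (rule sibling_pair_Node_right)
  qed
qed simp

lemma reduced_node_subtrees_disjoint:
  assumes "reduced T1 T2"
  shows "node_subtrees d T1 \<inter> node_subtrees d T2 = {}"
proof (rule ccontr)
  assume "node_subtrees d T1 \<inter> node_subtrees d T2 \<noteq> {}"
  then obtain a U where U: "(a, U) \<in> node_subtrees d T1" "(a, U) \<in> node_subtrees d T2" by auto
  then obtain b where "(b, Node Leaf Leaf) \<in> node_subtrees a U"
    using exposed_caret_in_node_subtrees node_subtrees_not_Leaf by blast
  then have b: "(b, Node Leaf Leaf) \<in> node_subtrees d T1 \<inter> node_subtrees d T2"
    using U node_subtrees_trans by blast
  then have "d + (b - d) = b" using node_subtrees_bounds by auto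
  with b have "(d + (b - d), Node Leaf Leaf) \<in> node_subtrees d T1 \<inter> node_subtrees d T2"
    by simp
  then have "sibling_pair T1 (b - d) \<and> sibling_pair T2 (b - d)"
    using sibling_pair_if_exposed_caret by blast
  with assms show False unfolding reduced_def by blast
qed

lemma appears_assoc_word_iff:
  assumes "num_nodes T1 = num_nodes T2"
  shows "appears t (assoc_word T1 T2) \<longleftrightarrow>
    (\<exists>U. (t, U) \<in> off_arm_subtrees 0 T1 \<union> off_arm_subtrees 0 T2)"
proof -
  have "appears t (assoc_word T1 T2) \<longleftrightarrow>
      t < num_leaves T1 \<and> (leaf_exp T1 t \<noteq> 0 \<or> leaf_exp T2 t \<noteq> 0)"
    unfolding appears_def assoc_word_def Let_def num_leaves_eq_Suc_num_nodes
    by (auto simp: image_iff simp del: upt_Suc)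
  also have "\<dots> \<longleftrightarrow> (\<exists>U. (t, U) \<in> off_arm_subtrees 0 T1 \<union> off_arm_subtrees 0 T2)"
  proof -
    have "num_leaves T2 = num_leaves T1" using assms by (simp add: num_leaves_eq_Suc_num_nodes)
    moreover have "t < num_leaves T" if "(t, U) \<in> off_arm_subtrees 0 T" for U T
      using that node_subtrees_bounds off_arm_subtrees_subset by fastforce
    ultimately show ?thesis
      using leaf_exp_neq_0_iff_off_arm[of t T1] leaf_exp_neq_0_iff_off_arm[of t T2] by (metis Un_iff)
  qed
  finally show ?thesis .
qed

lemma rot_right_eq_Some_iff: "rot_right T = Some T' \<longleftrightarrow> rot_left T' = Some T"
  by (cases T rule: rot_right.cases; cases T' rule: rot_left.cases) auto

lemma at_right_arm_rot_right_iff: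
  "at_right_arm k rot_right T = Some T' \<longleftrightarrow> at_right_arm k rot_left T' = Some T"
proof (induction k arbitrary: T T')
  case 0
  then show ?case by (simp add: rot_right_eq_Some_iff)
next
  case (Suc k)
  then show ?case by (cases T; cases T') auto
qed

lemma num_nodes_at_right_arm_rot_right:
  "at_right_arm k rot_right T = Some T' \<Longrightarrow> num_nodes T' = num_nodes T"
proof (induction k arbitrary: T T')
  case 0
  then show ?case by (cases T rule: rot_right.cases) auto
next
  case (Suc k)
  then show ?case by (cases T) auto
qed

lemma off_arm_subtrees_at_right_arm_rot_right:
  assumes "at_right_arm k rot_right T = Some T'" and "if k = 0 then a \<noteq> d else a < d + k"
  shows "(a, U) \<in> off_arm_subtrees d T' \<longleftrightarrow> (a, U) \<in> off_arm_subtrees d T"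
  using assms
proof (induction k arbitrary: T T' d)
  case 0
  then obtain A B C where "T = Node (Node A B) C" "T' = Node A (Node B C)"
    by (cases T rule: rot_right.cases) auto
  with 0 show ?case by (auto simp: ac_simps)
next
  case (Suc k)
  then obtain l r r' where "T = Node l r" "T' = Node l r'" "at_right_arm k rot_right r = Some r'"
    by (cases T) auto
  moreover have "if k = 0 then a \<noteq> d + num_leaves l else a < d + num_leaves l + k"
    using Suc.prems(2) num_leaves_pos[of l] by auto
  ultimately show ?case using Suc.IH by simp
qed

lemma rra_step_iff_rot_right:
  "rra_step Lv T T' \<longleftrightarrow>
    (\<exists>k\<in>Lv. at_right_arm k rot_right T = Some T' \<or> at_right_arm k rot_right T' = Some T)"
  unfolding rra_step_def by (metis at_right_arm_rot_right_iff)

lemma symp_rra_step: "symp (rra_step Lv)"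
  unfolding rra_step_iff_rot_right by (auto intro: sympI)

lemma rra_star_sym: "(rra_step Lv)\<^sup>*\<^sup>* T T' \<Longrightarrow> (rra_step Lv)\<^sup>*\<^sup>* T' T"
  using symp_rra_step symp_rtranclp sympD by metis

lemma num_nodes_rra_star: "(rra_step Lv)\<^sup>*\<^sup>* T T' \<Longrightarrow> num_nodes T' = num_nodes T"
  by (induction rule: rtranclp_induct)
    (auto simp: rra_step_iff_rot_right dest: num_nodes_at_right_arm_rot_right)

definition low_off_arm_subtrees :: "nat \<Rightarrow> tree \<Rightarrow> (nat \<times> tree) set" where
  "low_off_arm_subtrees p T = {(a, U) \<in> off_arm_subtrees 0 T. a \<in> {1..<p}}"

lemma low_off_arm_subtrees_rra_step:
  assumes "rra_step Lv T T'" and "Lv \<inter> {1..<p} = {}"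
  shows "low_off_arm_subtrees p T' = low_off_arm_subtrees p T"
proof -
  obtain k where "k \<in> Lv"
    and k: "at_right_arm k rot_right T = Some T' \<or> at_right_arm k rot_right T' = Some T"
    using assms(1) by (auto simp: rra_step_iff_rot_right)
  have "if k = 0 then a \<noteq> 0 else a < 0 + k" if "a \<in> {1..<p}" for a
    using that assms(2) \<open>k \<in> Lv\<close> by (cases "k = 0") auto
  then show ?thesis
    using k off_arm_subtrees_at_right_arm_rot_right unfolding low_off_arm_subtrees_def by blast
qed

lemma low_off_arm_subtrees_rra_star:
  "(rra_step Lv)\<^sup>*\<^sup>* T T' \<Longrightarrow> Lv \<inter> {1..<p} = {} \<Longrightarrow>
    low_off_arm_subtrees p T' = low_off_arm_subtrees p T"
  by (induction rule: rtranclp_induct) (simp_all add: low_off_arm_subtrees_rra_step)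

lemma low_off_arm_subtrees_empty_if_rra_defined:
  assumes "reduced T1 T2" and "rra_defined Lv T1 T2" and "Lv \<inter> {1..<p} = {}"
  shows "low_off_arm_subtrees p T1 \<union> low_off_arm_subtrees p T2 = {}"
proof -
  have "low_off_arm_subtrees p T2 = low_off_arm_subtrees p T1"
    using assms(2,3) low_off_arm_subtrees_rra_star unfolding rra_defined_def by blast
  moreover have "low_off_arm_subtrees p T1 \<inter> low_off_arm_subtrees p T2 = {}"
    using reduced_node_subtrees_disjoint[OF assms(1), of 0] off_arm_subtrees_subset
    unfolding low_off_arm_subtrees_def by blast
  ultimately show ?thesis by blast
qed

fun leaf_spine :: "nat \<Rightarrow> tree \<Rightarrow> tree" where
  "leaf_spine 0 X = X"
| "leaf_spine (Suc j) X = Node Leaf (leaf_spine j X)"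

fun left_vine :: "nat \<Rightarrow> tree" where
  "left_vine 0 = Leaf"
| "left_vine (Suc k) = Node (left_vine k) Leaf"

fun num_off_arm_nodes :: "tree \<Rightarrow> nat" where
  "num_off_arm_nodes Leaf = 0"
| "num_off_arm_nodes (Node l r) = num_nodes l + num_off_arm_nodes r"

lemma leaf_spine_add: "leaf_spine (i + j) X = leaf_spine i (leaf_spine j X)"
  by (induction i) auto

lemma at_right_arm_leaf_spine: "at_right_arm j f (leaf_spine j X) = map_option (leaf_spine j) (f X)"
  by (induction j) (auto simp: option.map_comp o_def option.map_ident)

lemma num_nodes_leaf_spine: "num_nodes (leaf_spine j X) = j + num_nodes X"
  by (induction j) auto

lemma num_off_arm_nodes_leaf_spine: "num_off_arm_nodes (leaf_spine j X) = num_off_arm_nodes X"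
  by (induction j) auto

lemma off_arm_subtrees_leaf_spine: "off_arm_subtrees d (leaf_spine j X) = off_arm_subtrees (d + j) X"
  by (induction j arbitrary: d) auto

lemma right_arm_cases:
  obtains (vine) m where "T = leaf_spine m Leaf"
  | (rotatable) j A B C where "T = leaf_spine j (Node (Node A B) C)"
proof (induction T arbitrary: thesis)
  case Leaf
  then show ?case by (metis leaf_spine.simps(1))
next
  case (Node l r)
  show ?case
  proof (cases l)
    case Leaf
    then show ?thesis using Node.IH(2) Node.prems by (metis leaf_spine.simps(2))
  next
    case (Node A B)
    then show ?thesis using Node.prems by (metis leaf_spine.simps(1))
  qed
qed

lemma rra_star_shift_into_left_vine:
  assumes "0 \<in> Lv"
  shows "(rra_step Lv)\<^sup>*\<^sup>* (Node (left_vine k) (leaf_spine s Y)) (Node (left_vine (k + s)) Y)"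
proof (induction s arbitrary: k)
  case (Suc s)
  have "rra_step Lv (Node (left_vine k) (leaf_spine (Suc s) Y))
      (Node (left_vine (Suc k)) (leaf_spine s Y))"
    unfolding rra_step_def using assms by (intro bexI[of _ 0]) auto
  with Suc.IH[of "Suc k"] show ?case by (simp add: converse_rtranclp_into_rtranclp)
qed simp

(* Left rotations at the root gather j - p leaves into a left vine, lifting the arm node at
   level j to level p. *)
lemma rra_star_rot_right_at_level:
  assumes "0 \<in> Lv" and "p \<in> Lv" and "0 < p" and "p \<le> j"
  shows "(rra_step Lv)\<^sup>*\<^sup>* (leaf_spine j (Node (Node A B) C)) (leaf_spine j (Node A (Node B C)))"
proof -
  define s where "s = j - p"
  have spine: "leaf_spine j X = Node (left_vine 0) (leaf_spine s (leaf_spine (p - 1) X))" for X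
    using assms(3,4) leaf_spine_add[of "Suc s" "p - 1" X] by (simp add: s_def)
  let ?lift = "\<lambda>X. Node (left_vine s) (leaf_spine (p - 1) X)"
  have "at_right_arm p rot_right (?lift (Node (Node A B) C)) = Some (?lift (Node A (Node B C)))"
    using assms(3) at_right_arm_leaf_spine[of "p - 1" rot_right] by (cases p) auto
  then have "rra_step Lv (?lift (Node (Node A B) C)) (?lift (Node A (Node B C)))"
    unfolding rra_step_def using assms(2) by blast
  moreover have "(rra_step Lv)\<^sup>*\<^sup>* (leaf_spine j (Node (Node A B) C)) (?lift (Node (Node A B) C))"
    unfolding spine using rra_star_shift_into_left_vine[OF assms(1), of 0 s] by simp
  moreover have "(rra_step Lv)\<^sup>*\<^sup>* (?lift (Node A (Node B C))) (leaf_spine j (Node A (Node B C)))"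
    unfolding spine using rra_star_sym rra_star_shift_into_left_vine[OF assms(1), of 0 s] by simp
  ultimately show ?thesis by (meson rtranclp.rtrancl_into_rtrancl rtranclp_trans)
qed

lemma rra_star_right_vine:
  assumes "0 \<in> Lv" and "p \<in> Lv" and "0 < p" and "Lv \<inter> {1..<p} = {}"
    and "low_off_arm_subtrees p T = {}"
  shows "(rra_step Lv)\<^sup>*\<^sup>* T (leaf_spine (num_nodes T) Leaf)"
  using assms(5)
proof (induction "num_off_arm_nodes T" arbitrary: T rule: less_induct)
  case less
  show ?case
  proof (cases T rule: right_arm_cases)
    case (vine m)
    then show ?thesis by (simp add: num_nodes_leaf_spine)
  next
    case (rotatable j A B C)
    define T' where "T' = leaf_spine j (Node A (Node B C))"
    have T_T': "(rra_step Lv)\<^sup>*\<^sup>* T T'"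
    proof (cases "j = 0")
      case True
      then show ?thesis
        unfolding rotatable T'_def rra_step_def using assms(1)
        by (auto intro!: r_into_rtranclp bexI[of _ 0])
    next
      case False
      have "(j, Node A B) \<in> off_arm_subtrees 0 T"
        by (simp add: rotatable off_arm_subtrees_leaf_spine)
      with False less.prems have "p \<le> j" unfolding low_off_arm_subtrees_def by fastforce
      then show ?thesis unfolding rotatable T'_def using rra_star_rot_right_at_level assms by blast
    qed
    have "num_off_arm_nodes T' < num_off_arm_nodes T"
      by (simp add: rotatable T'_def num_off_arm_nodes_leaf_spine)
    moreover have "low_off_arm_subtrees p T' = {}"
      using low_off_arm_subtrees_rra_star[OF T_T' assms(4)] less.prems by simp
    ultimately have "(rra_step Lv)\<^sup>*\<^sup>* T' (leaf_spine (num_nodes T') Leaf)"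
      using less.hyps by blast
    with T_T' show ?thesis using num_nodes_rra_star[OF T_T'] by (metis rtranclp_trans)
  qed
qed

theorem lemma3p4:
  fixes idx :: "nat list" and T1 T2 :: tree
  assumes "idx \<noteq> []" and "0 < hd idx" and "sorted_wrt (<) idx"
    and "num_nodes T1 = num_nodes T2"
    and "reduced T1 T2"
  shows "((\<exists>t. 1 \<le> t \<and> t \<le> hd idx - 1 \<and> appears t (assoc_word T1 T2))
            \<longrightarrow> \<not> rra_defined (insert 0 (set idx)) T1 T2)
       \<and> ((\<not> (\<exists>t. 1 \<le> t \<and> t \<le> hd idx - 1 \<and> appears t (assoc_word T1 T2)))
            \<longrightarrow> rra_defined (insert 0 (set idx)) T1 T2)"
proof -
  define p where "p = hd idx"
  define Lv where "Lv = insert 0 (set idx)"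
  have levels: "0 \<in> Lv" "p \<in> Lv" "0 < p" "Lv \<inter> {1..<p} = {}"
    using assms(1-3) unfolding p_def Lv_def by (cases idx; fastforce)+
  have appears_iff: "(\<exists>t. 1 \<le> t \<and> t \<le> hd idx - 1 \<and> appears t (assoc_word T1 T2)) \<longleftrightarrow>
      low_off_arm_subtrees p T1 \<union> low_off_arm_subtrees p T2 \<noteq> {}"
    using \<open>0 < p\<close> unfolding appears_assoc_word_iff[OF assms(4)] low_off_arm_subtrees_def p_def
    by fastforce
  show ?thesis
  proof (intro conjI impI)
    assume "\<exists>t. 1 \<le> t \<and> t \<le> hd idx - 1 \<and> appears t (assoc_word T1 T2)"
    then show "\<not> rra_defined (insert 0 (set idx)) T1 T2"
      using low_off_arm_subtrees_empty_if_rra_defined[OF assms(5) _ levels(4)] appears_iff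
      unfolding Lv_def by blast
  next
    assume "\<not> (\<exists>t. 1 \<le> t \<and> t \<le> hd idx - 1 \<and> appears t (assoc_word T1 T2))"
    then have "low_off_arm_subtrees p T1 = {}" and "low_off_arm_subtrees p T2 = {}"
      using appears_iff by auto
    then have "(rra_step Lv)\<^sup>*\<^sup>* T1 (leaf_spine (num_nodes T1) Leaf)"
      and "(rra_step Lv)\<^sup>*\<^sup>* T2 (leaf_spine (num_nodes T1) Leaf)"
      using rra_star_right_vine[OF levels] assms(4) by metis+
    then show "rra_defined (insert 0 (set idx)) T1 T2"
      unfolding rra_defined_def Lv_def[symmetric]
      using rra_star_sym rtranclp_trans by metis
  qed
qed

end
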